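(* For any valid scheme (satisfying (C1)–(C8)) with $N\ge1$, $K\ge2$, \[ I\big(W_{2:K};Q_{1:N}^{[1,\mathcal{R}_U]},A_{1:N}^{[1,\mathcal{R}_U]},\mathcal{R}_S\,\big|\,W_1\big)\le D-L. \]
   Context: Model (SPIR with user-side common randomness). There are $N\ge1$ non-colluding databases, each storing the same $K\ge2$ messages $W_1,\dots,W_K$. Each message consists of $L$ i.i.d. symbols uniform over a sufficiently large finite field $\mathbb{F}_q$; entropies are in $q$-ary units, so $H(W_k)=L$ and $H(W_{1:K})=KL$. The databases share server-side common randomness $\mathcal{R}_S$, unknown to the user. The user holds user-side common randomness $\mathcal{R}_U$, a subset of the components of $\mathcal{R}_S$, unknown to the databases except for its size (uniform over subsets of given cardinality). $\mathcal{F}$ is the user's retrieval-strategy randomness. To retrieve $W_k$ the user sends $Q_n^{[k,\mathcal{R}_U]}$ to database $n$, receiving $A_n^{[k,\mathcal{R}_U]}$; $W_{\bar k}=\{W_j:j\ne k\}$. A valid scheme satisfies for all $k,n,\mathcal{R}_U$: (C1) $I(W_{1:K};k,\mathcal{F},\mathcal{R}_S,\mathcal{R}_U)=0$; (C2) $I(Q_{1:N}^{[k,\mathcal{R}_U]};W_{1:K},\mathcal{R}_S\setminus\mathcal{R}_U)=0$; (C3) $H(Q_{1:N}^{[k,\mathcal{R}_U]}\mid\mathcal{F})=0$; (C4) $H(A_n^{[k,\mathcal{R}_U]}\mid Q_n^{[k,\mathcal{R}_U]},W_{1:K},\mathcal{R}_S)=0$; (C5) $H(W_k\mid\mathcal{F},A_{1:N}^{[k,\mathcal{R}_U]},\mathcal{R}_U)=0$;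 (C6) user privacy: for all $k,k',n,\mathcal{R}_U$ there is $\mathcal{R}_U'$ with $H(\mathcal{R}_U')=H(\mathcal{R}_U)$ and $(Q_n^{[k,\mathcal{R}_U]},A_n^{[k,\mathcal{R}_U]},W_{1:K},\mathcal{R}_S)\sim(Q_n^{[k',\mathcal{R}_U']},A_n^{[k',\mathcal{R}_U']},W_{1:K},\mathcal{R}_S)$; (C7) $I(W_{\bar k};\mathcal{F},A_{1:N}^{[k,\mathcal{R}_U]},\mathcal{R}_U)=0$; (C8) $I(\mathcal{R}_S\setminus\mathcal{R}_U;\mathcal{F},A_{1:N}^{[k,\mathcal{R}_U]},W_k,\mathcal{R}_U)=0$. $D$ is the maximal total number of downloaded symbols (from all databases). *)

theory Defs
  imports "HOL-Probability.Probability"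
begin

abbreviation Ent :: "'a measure \<Rightarrow> real \<Rightarrow> ('a \<Rightarrow> 'b) \<Rightarrow> real" where
  "Ent M b X \<equiv> prob_space.entropy M b (count_space (X ` space M)) X"

abbreviation CEnt :: "'a measure \<Rightarrow> real \<Rightarrow> ('a \<Rightarrow> 'b) \<Rightarrow> ('a \<Rightarrow> 'c) \<Rightarrow> real" where
  "CEnt M b X Y \<equiv> prob_space.conditional_entropy M b
      (count_space (X ` space M)) (count_space (Y ` space M)) X Y"

abbreviation MI :: "'a measure \<Rightarrow> real \<Rightarrow> ('a \<Rightarrow> 'b) \<Rightarrow> ('a \<Rightarrow> 'c) \<Rightarrow> real" where
  "MI M b X Y \<equiv> prob_space.mutual_information M b
      (count_space (X ` space M)) (count_space (Y ` space M)) X Y"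

abbreviation CMI :: "'a measure \<Rightarrow> real \<Rightarrow> ('a \<Rightarrow> 'b) \<Rightarrow> ('a \<Rightarrow> 'c) \<Rightarrow> ('a \<Rightarrow> 'd) \<Rightarrow> real" where
  "CMI M b X Y Z \<equiv> prob_space.conditional_mutual_information M b
      (count_space (X ` space M)) (count_space (Y ` space M)) (count_space (Z ` space M)) X Y Z"

definition same_distr :: "'a measure \<Rightarrow> ('a \<Rightarrow> 'b) \<Rightarrow> ('a \<Rightarrow> 'b) \<Rightarrow> bool" where
  "same_distr M X Y \<longleftrightarrow>
     (\<forall>x. measure M {\<omega> \<in> space M. X \<omega> = x} = measure M {\<omega> \<in> space M. Y \<omega> = x})"

definition Ws :: "(nat \<Rightarrow> 'a \<Rightarrow> 'f list) \<Rightarrow> nat list \<Rightarrow> 'a \<Rightarrow> 'f list list" where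
  "Ws W ks \<omega> = map (\<lambda>k. W k \<omega>) ks"

definition Wall :: "nat \<Rightarrow> (nat \<Rightarrow> 'a \<Rightarrow> 'f list) \<Rightarrow> 'a \<Rightarrow> 'f list list" where
  "Wall K W = Ws W [1..<Suc K]"

definition Wbar :: "nat \<Rightarrow> (nat \<Rightarrow> 'a \<Rightarrow> 'f list) \<Rightarrow> nat \<Rightarrow> 'a \<Rightarrow> 'f list list" where
  "Wbar K W k = Ws W (filter (\<lambda>j. j \<noteq> k) [1..<Suc K])"

definition RV :: "('j \<Rightarrow> 'a \<Rightarrow> 'r) \<Rightarrow> 'j set \<Rightarrow> 'a \<Rightarrow> ('j \<Rightarrow> 'r)" where
  "RV Rs S \<omega> = restrict (\<lambda>j. Rs j \<omega>) S"

definition alldb :: "nat \<Rightarrow> (nat \<Rightarrow> 'a \<Rightarrow> 'b) \<Rightarrow> 'a \<Rightarrow> 'b list" where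
  "alldb N X \<omega> = map (\<lambda>n. X n \<omega>) [1..<Suc N]"

definition adm :: "'j set \<Rightarrow> nat \<Rightarrow> 'j set set" where
  "adm J m = {U. U \<subseteq> J \<and> card U = m}"

(* The probabilistic model: sample space M, entropies in q-ary units with q = |F_q|;
   F = strategy randomness; R_S has components Rs j, j \<in> J; R_U = RV Rs U for U \<in> adm J m;
   messages W 1..W K; queries Q k U n and answers A k U n for retrieving W_k
   with user-side randomness R_U = RV Rs U from database n. *)
definition spir_model ::
  "'a measure \<Rightarrow> nat \<Rightarrow> nat \<Rightarrow> nat \<Rightarrow> 'j set \<Rightarrow> nat \<Rightarrow> ('a \<Rightarrow> 'v) \<Rightarrow> ('j \<Rightarrow> 'a \<Rightarrow> 'r)
   \<Rightarrow> (nat \<Rightarrow> 'a \<Rightarrow> 'f::{finite,field} list)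
   \<Rightarrow> (nat \<Rightarrow> 'j set \<Rightarrow> nat \<Rightarrow> 'a \<Rightarrow> 'qv) \<Rightarrow> (nat \<Rightarrow> 'j set \<Rightarrow> nat \<Rightarrow> 'a \<Rightarrow> 'f list) \<Rightarrow> bool" where
  "spir_model M N K L J m F Rs W Q A \<longleftrightarrow>
     prob_space M \<and> finite J \<and>
     simple_function M F \<and> (\<forall>j\<in>J. simple_function M (Rs j)) \<and>
     (\<forall>k\<in>{1..K}. simple_function M (W k)) \<and>
     (\<forall>k\<in>{1..K}. \<forall>U\<in>adm J m. \<forall>n\<in>{1..N}.
        simple_function M (Q k U n) \<and> simple_function M (A k U n)) \<and>
     \<comment> \<open>messages: K L symbols i.i.d. uniform over F_q, i.e. W_{1:K} uniform\<close>
     (\<forall>ws. length ws = K \<and> (\<forall>w\<in>set ws. length w = L) \<longrightarrow>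
        measure M {\<omega> \<in> space M. Wall K W \<omega> = ws} = 1 / real CARD('f) ^ (K * L))"

definition valid_scheme ::
  "'a measure \<Rightarrow> nat \<Rightarrow> nat \<Rightarrow> 'j set \<Rightarrow> nat \<Rightarrow> ('a \<Rightarrow> 'v) \<Rightarrow> ('j \<Rightarrow> 'a \<Rightarrow> 'r)
   \<Rightarrow> (nat \<Rightarrow> 'a \<Rightarrow> 'f::{finite,field} list)
   \<Rightarrow> (nat \<Rightarrow> 'j set \<Rightarrow> nat \<Rightarrow> 'a \<Rightarrow> 'qv) \<Rightarrow> (nat \<Rightarrow> 'j set \<Rightarrow> nat \<Rightarrow> 'a \<Rightarrow> 'f list) \<Rightarrow> bool" where
  "valid_scheme M N K J m F Rs W Q A \<longleftrightarrow>
    (let q = real CARD('f); RS = RV Rs J in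
     \<comment> \<open>(C1)\<close>
     (\<forall>U\<in>adm J m. MI M q (Wall K W) (\<lambda>\<omega>. (F \<omega>, RS \<omega>, RV Rs U \<omega>)) = 0) \<and>
     (\<forall>k\<in>{1..K}. \<forall>U\<in>adm J m.
        \<comment> \<open>(C2)\<close>
        MI M q (alldb N (Q k U)) (\<lambda>\<omega>. (Wall K W \<omega>, RV Rs (J - U) \<omega>)) = 0 \<and>
        \<comment> \<open>(C3)\<close>
        CEnt M q (alldb N (Q k U)) F = 0 \<and>
        \<comment> \<open>(C4)\<close>
        (\<forall>n\<in>{1..N}. CEnt M q (A k U n) (\<lambda>\<omega>. (Q k U n \<omega>, Wall K W \<omega>, RS \<omega>)) = 0) \<and>
        \<comment> \<open>(C5)\<close>
        CEnt M q (W k) (\<lambda>\<omega>. (F \<omega>, alldb N (A k U) \<omega>, RV Rs U \<omega>)) = 0 \<and>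
        \<comment> \<open>(C6)\<close>
        (\<forall>k'\<in>{1..K}. \<forall>n\<in>{1..N}. \<exists>U'\<in>adm J m.
           Ent M q (RV Rs U') = Ent M q (RV Rs U) \<and>
           same_distr M (\<lambda>\<omega>. (Q k U n \<omega>, A k U n \<omega>, Wall K W \<omega>, RS \<omega>))
                        (\<lambda>\<omega>. (Q k' U' n \<omega>, A k' U' n \<omega>, Wall K W \<omega>, RS \<omega>))) \<and>
        \<comment> \<open>(C7)\<close>
        MI M q (Wbar K W k) (\<lambda>\<omega>. (F \<omega>, alldb N (A k U) \<omega>, RV Rs U \<omega>)) = 0 \<and>
        \<comment> \<open>(C8)\<close>
        MI M q (RV Rs (J - U)) (\<lambda>\<omega>. (F \<omega>, alldb N (A k U) \<omega>, W k \<omega>, RV Rs U \<omega>)) = 0))"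

end

theory Submission
  imports Defs
begin

text \<open>
  By the chain rule, I(W_{2:K}; Q,A,R_S | W_1) = H(W_{2:K} | W_1) - H(W_{2:K} | Q,A,R_S,W_1).
  Conditioning additionally on F and using that the messages are independent of (F, R_S)
  by (C1), this is at most H(F,Q,A,R_S,W_1) - H(F,R_S) - H(W_1). As W_1 is decodable from
  (F, A, R_U) by (C5) and R_U is part of R_S, W_1 can be dropped from the first term; as the
  queries are determined by F by (C3), what remains is at most H(A | Q). Since the answer
  lengths are fixed by the queries and the answers comprise at most D symbols of F_q,
  H(A | Q) \<le> D, while H(W_1) \<ge> L because W_{1:K} is uniform.
\<close>

lemma simple_function_map_list:
  assumes "\<And>i. i \<in> set xs \<Longrightarrow> simple_function M (X i)"
  shows "simple_function M (\<lambda>\<omega>. map (\<lambda>i. X i \<omega>) xs)"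
  using assms
proof (induction xs)
  case (Cons i xs)
  then have "simple_function M (\<lambda>\<omega>. (X i \<omega>, map (\<lambda>i. X i \<omega>) xs))"
    by (intro simple_function_Pair) auto
  from simple_function_compose[OF this, of "\<lambda>(x, xs). x # xs"] show ?case
    by (simp add: comp_def)
qed simp

lemma simple_function_restrict:
  assumes "finite I" "\<And>i. i \<in> I \<Longrightarrow> simple_function M (X i)"
  shows "simple_function M (\<lambda>\<omega>. restrict (\<lambda>i. X i \<omega>) I)"
  using assms
proof (induction I rule: finite_induct)
  case (insert j I)
  have eq: "(\<lambda>\<omega>. restrict (\<lambda>i. X i \<omega>) (insert j I)) =
      (\<lambda>(x, f). f(j := x)) \<circ> (\<lambda>\<omega>. (X j \<omega>, restrict (\<lambda>i. X i \<omega>) I))"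
    using insert.hyps(2) by (auto simp: fun_eq_iff)
  have "simple_function M (\<lambda>\<omega>. (X j \<omega>, restrict (\<lambda>i. X i \<omega>) I))"
    using insert by (intro simple_function_Pair) (auto simp del: restrict_apply)
  then show ?case unfolding eq by (rule simple_function_compose)
qed (simp add: restrict_def)

lemma (in prob_space) prob_compose_le_of_uniform:
  assumes V: "simple_function M V" and S: "finite S" "S \<noteq> {}"
    and unif: "\<And>s. s \<in> S \<Longrightarrow> prob (V -` {s} \<inter> space M) = 1 / card S"
  shows "prob ((\<lambda>\<omega>. f (V \<omega>)) -` {y} \<inter> space M) \<le> card {s \<in> S. f s = y} / card S"
proof -
  let ?T = "{s \<in> S. f s = y}"
  have prob_sum: "prob (V -` T \<inter> space M) = (\<Sum>s\<in>T. prob (V -` {s} \<inter> space M))" if "finite T" for T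
  proof -
    have "prob (\<Union>s\<in>T. V -` {s} \<inter> space M) = (\<Sum>s\<in>T. prob (V -` {s} \<inter> space M))"
      by (rule finite_measure_finite_Union)
         (use that V in \<open>auto simp: disjoint_family_on_def simple_functionD\<close>)
    moreover have "(\<Union>s\<in>T. V -` {s} \<inter> space M) = V -` T \<inter> space M" by auto
    ultimately show ?thesis by simp
  qed
  have ev: "V -` A \<inter> space M \<in> events" for A
    using V by (rule simple_functionD)
  have "prob (V -` S \<inter> space M) = 1"
    using S by (simp add: prob_sum[OF S(1)] unif)
  then have null: "prob (space M - (V -` S \<inter> space M)) = 0"
    using prob_compl[OF ev[of S]] by simp
  have T: "prob (V -` ?T \<inter> space M) = card ?T / card S"
    using S by (subst prob_sum) (auto simp: unif)
  have "(\<lambda>\<omega>. f (V \<omega>)) -` {y} \<inter> space M \<subseteq> (space M - (V -` S \<inter> space M)) \<union> (V -` ?T \<inter> space M)"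
    by blast
  then have "prob ((\<lambda>\<omega>. f (V \<omega>)) -` {y} \<inter> space M)
      \<le> prob ((space M - (V -` S \<inter> space M)) \<union> (V -` ?T \<inter> space M))"
    by (intro finite_measure_mono sets.Un sets.Diff ev sets.top)
  also have "\<dots> \<le> prob (space M - (V -` S \<inter> space M)) + prob (V -` ?T \<inter> space M)"
    by (intro measure_Un_le sets.Diff ev sets.top)
  also have "\<dots> = card ?T / card S"
    by (simp only: null T add_0)
  finally show ?thesis .
qed

context information_space
begin

abbreviation Pr :: "('a \<Rightarrow> 'b) \<Rightarrow> 'b \<Rightarrow> real" where
  "Pr X x \<equiv> prob (X -` {x} \<inter> space M)"

lemma entropy_simple_function:
  assumes "simple_function M X"
  shows "\<H>(X) = - (\<Sum>x\<in>X`space M. Pr X x * log b (Pr X x))"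
  using entropy_simple_distributed[OF simple_distributedI[OF assms measure_nonneg refl]] .

lemma sum_Pr_compose:
  assumes X: "simple_function M X" and Y: "\<And>\<omega>. Y \<omega> = f (X \<omega>)"
  shows "(\<Sum>x\<in>X`space M. Pr X x * g (f x)) = (\<Sum>y\<in>Y`space M. Pr Y y * g y)"
proof -
  have fin: "finite (X`space M)" using X by (rule simple_functionD)
  have "(\<Sum>x\<in>X`space M. Pr X x * g (f x)) =
      (\<Sum>y\<in>f ` X ` space M. \<Sum>x\<in>{x \<in> X`space M. f x = y}. Pr X x * g (f x))"
    by (rule sum.image_gen[OF fin])
  also have "\<dots> = (\<Sum>y\<in>f ` X ` space M. Pr Y y * g y)"
  proof (rule sum.cong[OF refl])
    fix y
    have "(\<Sum>x\<in>{x \<in> X`space M. f x = y}. Pr X x) =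
        prob (\<Union>x\<in>{x \<in> X`space M. f x = y}. X -` {x} \<inter> space M)"
      by (rule finite_measure_finite_Union[symmetric])
         (use fin X in \<open>auto simp: disjoint_family_on_def simple_functionD\<close>)
    also have "(\<Union>x\<in>{x \<in> X`space M. f x = y}. X -` {x} \<inter> space M) = Y -` {y} \<inter> space M"
      using Y by auto
    finally show "(\<Sum>x\<in>{x \<in> X`space M. f x = y}. Pr X x * g (f x)) = Pr Y y * g y"
      by (simp add: sum_distrib_right[symmetric])
  qed
  also have "f ` X ` space M = Y ` space M" using Y by (auto simp: image_image)
  finally show ?thesis .
qed

lemma Pr_le_Pr_compose:
  assumes "simple_function M X" "simple_function M Y" "\<And>\<omega>. Y \<omega> = f (X \<omega>)"
  shows "Pr X x \<le> Pr Y (f x)"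
  by (rule finite_measure_mono) (use assms in \<open>auto simp: simple_functionD\<close>)

lemma conditional_mutual_information_eq_entropies:
  assumes X: "simple_function M X" and Y: "simple_function M Y" and Z: "simple_function M Z"
  shows "\<I>(X ; Y | Z) = \<H>(\<lambda>\<omega>. (X \<omega>, Z \<omega>)) + \<H>(\<lambda>\<omega>. (Y \<omega>, Z \<omega>))
      - \<H>(\<lambda>\<omega>. (X \<omega>, Y \<omega>, Z \<omega>)) - \<H>(Z)"
proof -
  let ?XZ = "\<lambda>\<omega>. (X \<omega>, Z \<omega>)" and ?YZ = "\<lambda>\<omega>. (Y \<omega>, Z \<omega>)" and ?V = "\<lambda>\<omega>. (X \<omega>, Y \<omega>, Z \<omega>)"
  let ?xz = "\<lambda>(x, y, z). (x, z)" and ?yz = "\<lambda>(x, y, z). (y, z)" and ?z = "\<lambda>(x, y, z). z"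
  have XZ: "simple_function M ?XZ" and YZ: "simple_function M ?YZ" and V: "simple_function M ?V"
    using X Y Z by (auto intro: simple_function_Pair)
  note sd = simple_distributedI[OF _ measure_nonneg refl]
  have term_eq: "Pr ?V v * log b (Pr ?V v / (Pr ?XZ (?xz v) * (Pr ?YZ (?yz v) / Pr Z (?z v)))) =
      Pr ?V v * log b (Pr ?V v) - Pr ?V v * log b (Pr ?XZ (?xz v))
      - Pr ?V v * log b (Pr ?YZ (?yz v)) + Pr ?V v * log b (Pr Z (?z v))" for v
  proof (cases "Pr ?V v = 0")
    case False
    then have pos: "0 < Pr ?V v" using measure_nonneg[of M] by (simp add: order_less_le)
    have "Pr ?V v \<le> Pr ?XZ (?xz v)" "Pr ?V v \<le> Pr ?YZ (?yz v)" "Pr ?V v \<le> Pr Z (?z v)"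
      by (auto intro!: Pr_le_Pr_compose V XZ YZ Z)
    then show ?thesis
      using pos by (simp add: log_divide log_mult algebra_simps)
  qed simp
  have "\<I>(X ; Y | Z) = (\<Sum>v\<in>?V`space M.
      Pr ?V v * log b (Pr ?V v / (Pr ?XZ (?xz v) * (Pr ?YZ (?yz v) / Pr Z (?z v)))))"
    by (subst conditional_mutual_information_eq[OF sd[OF Z] sd[OF YZ] sd[OF XZ] sd[OF V]])
       (simp add: case_prod_beta)
  also have "\<dots> = (\<Sum>v\<in>?V`space M. Pr ?V v * log b (Pr ?V v))
      - (\<Sum>v\<in>?V`space M. Pr ?V v * log b (Pr ?XZ (?xz v)))
      - (\<Sum>v\<in>?V`space M. Pr ?V v * log b (Pr ?YZ (?yz v)))
      + (\<Sum>v\<in>?V`space M. Pr ?V v * log b (Pr Z (?z v)))"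
    by (simp only: term_eq sum.distrib sum_subtractf)
  also have "(\<Sum>v\<in>?V`space M. Pr ?V v * log b (Pr ?XZ (?xz v))) = - \<H>(?XZ)"
    using sum_Pr_compose[OF V, where f="?xz" and g="\<lambda>u. log b (Pr ?XZ u)"]
    by (simp add: entropy_simple_function[OF XZ])
  also have "(\<Sum>v\<in>?V`space M. Pr ?V v * log b (Pr ?YZ (?yz v))) = - \<H>(?YZ)"
    using sum_Pr_compose[OF V, where f="?yz" and g="\<lambda>u. log b (Pr ?YZ u)"]
    by (simp add: entropy_simple_function[OF YZ])
  also have "(\<Sum>v\<in>?V`space M. Pr ?V v * log b (Pr Z (?z v))) = - \<H>(Z)"
    using sum_Pr_compose[OF V, where f="?z" and g="\<lambda>u. log b (Pr Z u)"]
    by (simp add: entropy_simple_function[OF Z])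
  finally show ?thesis
    by (simp add: entropy_simple_function[OF V])
qed

lemma entropy_le_if_determined:
  assumes X: "simple_function M X" and Y: "simple_function M Y"
    and det: "\<And>\<omega> \<omega>'. \<omega> \<in> space M \<Longrightarrow> \<omega>' \<in> space M \<Longrightarrow> X \<omega> = X \<omega>' \<Longrightarrow> Y \<omega> = Y \<omega>'"
  shows "\<H>(Y) \<le> \<H>(X)"
proof -
  define f where "f x = Y (SOME \<omega>. \<omega> \<in> space M \<and> X \<omega> = x)" for x
  have f: "f (X \<omega>) = Y \<omega>" if \<omega>: "\<omega> \<in> space M" for \<omega>
  proof -
    have "\<exists>\<omega>'. \<omega>' \<in> space M \<and> X \<omega>' = X \<omega>" using \<omega> by blast
    from someI_ex[OF this] show ?thesis unfolding f_def using det \<omega> by metis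
  qed
  have fX: "simple_function M (f \<circ> X)" using X by (rule simple_function_compose)
  have img: "(f \<circ> X) ` space M = Y ` space M" using f by (force simp: image_iff)
  have pre: "(f \<circ> X) -` {y} \<inter> space M = Y -` {y} \<inter> space M" for y using f by auto
  have "\<H>(Y) = \<H>(f \<circ> X)"
    unfolding entropy_simple_function[OF fX] entropy_simple_function[OF Y] by (simp only: img pre)
  also have "\<dots> \<le> \<H>(X)" using X by (rule entropy_data_processing)
  finally show ?thesis .
qed

lemma entropy_eq_if_determined:
  assumes "simple_function M X" "simple_function M Y"
    and "\<And>\<omega> \<omega>'. \<omega> \<in> space M \<Longrightarrow> \<omega>' \<in> space M \<Longrightarrow> X \<omega> = X \<omega>' \<longleftrightarrow> Y \<omega> = Y \<omega>'"
  shows "\<H>(Y) = \<H>(X)"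
  using entropy_le_if_determined[of X Y] entropy_le_if_determined[of Y X] assms
  by (meson order_antisym)

lemma conditional_entropy_eq_entropies:
  assumes "simple_function M X" "simple_function M Y"
  shows "\<H>(X | Y) = \<H>(\<lambda>\<omega>. (Y \<omega>, X \<omega>)) - \<H>(Y)"
  using entropy_chain_rule[OF assms(2,1)] by simp

lemma entropy_submodular:
  assumes X: "simple_function M X" and Y: "simple_function M Y" and Z: "simple_function M Z"
  shows "\<H>(\<lambda>\<omega>. (X \<omega>, Y \<omega>, Z \<omega>)) + \<H>(Z) \<le> \<H>(\<lambda>\<omega>. (X \<omega>, Z \<omega>)) + \<H>(\<lambda>\<omega>. (Y \<omega>, Z \<omega>))"
  using conditional_mutual_information_nonneg[OF X Y Z]
    conditional_mutual_information_eq_entropies[OF X Y Z] by simp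

lemma conditional_entropy_le_if_determined:
  assumes X: "simple_function M X" and Y: "simple_function M Y" and Z: "simple_function M Z"
    and det: "\<And>\<omega> \<omega>'. \<omega> \<in> space M \<Longrightarrow> \<omega>' \<in> space M \<Longrightarrow> Z \<omega> = Z \<omega>' \<Longrightarrow> Y \<omega> = Y \<omega>'"
  shows "\<H>(X | Z) \<le> \<H>(X | Y)"
proof -
  have "\<H>(\<lambda>\<omega>. (X \<omega>, Z \<omega>, Y \<omega>)) = \<H>(\<lambda>\<omega>. (Z \<omega>, X \<omega>))"
    "\<H>(\<lambda>\<omega>. (Z \<omega>, Y \<omega>)) = \<H>(Z)" "\<H>(\<lambda>\<omega>. (X \<omega>, Y \<omega>)) = \<H>(\<lambda>\<omega>. (Y \<omega>, X \<omega>))"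
    by (rule entropy_eq_if_determined; use X Y Z in \<open>auto dest: det\<close>)+
  then show ?thesis
    using entropy_submodular[OF X Z Y]
    by (simp add: conditional_entropy_eq_entropies X Y Z)
qed

lemma conditional_entropy_eq_if_determined:
  assumes "simple_function M X" "simple_function M Y" "simple_function M Z"
    and "\<And>\<omega> \<omega>'. \<omega> \<in> space M \<Longrightarrow> \<omega>' \<in> space M \<Longrightarrow> Z \<omega> = Z \<omega>' \<longleftrightarrow> Y \<omega> = Y \<omega>'"
  shows "\<H>(X | Z) = \<H>(X | Y)"
  using conditional_entropy_le_if_determined[of X Y Z] conditional_entropy_le_if_determined[of X Z Y]
    assms by (meson order_antisym)

lemma conditional_mutual_information_eq_conditional_entropy_diff:
  assumes X: "simple_function M X" and Y: "simple_function M Y" and Z: "simple_function M Z"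
  shows "\<I>(X ; Y | Z) = \<H>(X | Z) - \<H>(X | (\<lambda>\<omega>. (Y \<omega>, Z \<omega>)))"
proof -
  have "\<H>(\<lambda>\<omega>. (X \<omega>, Z \<omega>)) = \<H>(\<lambda>\<omega>. (Z \<omega>, X \<omega>))"
    "\<H>(\<lambda>\<omega>. (X \<omega>, Y \<omega>, Z \<omega>)) = \<H>(\<lambda>\<omega>. ((Y \<omega>, Z \<omega>), X \<omega>))"
    by (rule entropy_eq_if_determined; use X Y Z in auto)+
  then show ?thesis
    by (simp add: conditional_mutual_information_eq_entropies conditional_entropy_eq_entropies X Y Z)
qed

lemma entropy_ge_if_Pr_le:
  assumes X: "simple_function M X" and p: "0 < p" and le: "\<And>x. Pr X x \<le> p"
  shows "- log b p \<le> \<H>(X)"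
proof -
  have "(\<Sum>x\<in>X`space M. Pr X x * - log b p) \<le> (\<Sum>x\<in>X`space M. Pr X x * - log b (Pr X x))"
  proof (rule sum_mono)
    fix x
    show "Pr X x * - log b p \<le> Pr X x * - log b (Pr X x)"
    proof (cases "Pr X x = 0")
      case False
      then have "0 < Pr X x" using measure_nonneg[of M] by (simp add: order_less_le)
      then show ?thesis
        using le[of x] p b_gt_1 by (intro mult_left_mono) auto
    qed simp
  qed
  moreover have "(\<Sum>x\<in>X`space M. Pr X x) = 1"
    using simple_distributed_sum_space[OF simple_distributedI[OF X measure_nonneg refl]] .
  ultimately show ?thesis
    by (simp add: entropy_simple_function[OF X] sum_negf sum_distrib_right[symmetric])
qed

lemma entropy_le_log_card:
  assumes X: "simple_function M X" and S: "finite S" "X ` space M \<subseteq> S"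
  shows "\<H>(X) \<le> log b (card S)"
proof -
  have "0 < card (X ` space M)"
    using not_empty finite_subset[OF S(2,1)] by (simp add: card_gt_0_iff)
  moreover have "card (X ` space M) \<le> card S" using S by (rule card_mono)
  ultimately have "log b (card (X ` space M)) \<le> log b (card S)"
    using b_gt_1 by (subst log_le_cancel_iff) auto
  then show ?thesis
    using entropy_le_card[OF simple_distributedI[OF X measure_nonneg refl]] by linarith
qed

lemma conditional_mutual_information_le_of_independent:
  assumes W1: "simple_function M W1" and Wr: "simple_function M Wr" and Wa: "simple_function M Wa"
    and F: "simple_function M F" and X: "simple_function M X" and G: "simple_function M G"
    and Wa_eq: "\<And>\<omega> \<omega>'. \<omega> \<in> space M \<Longrightarrow> \<omega>' \<in> space M \<Longrightarrow>
      Wa \<omega> = Wa \<omega>' \<longleftrightarrow> (W1 \<omega>, Wr \<omega>) = (W1 \<omega>', Wr \<omega>')"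
    and G_det: "\<And>\<omega> \<omega>'. \<omega> \<in> space M \<Longrightarrow> \<omega>' \<in> space M \<Longrightarrow>
      (F \<omega>, X \<omega>) = (F \<omega>', X \<omega>') \<Longrightarrow> G \<omega> = G \<omega>'"
    and indep: "\<I>(Wa ; G) = 0"
  shows "\<I>(Wr ; X | W1) + \<H>(W1) + \<H>(G) \<le> \<H>(\<lambda>\<omega>. ((F \<omega>, X \<omega>), W1 \<omega>))"
proof -
  let ?FXW = "\<lambda>\<omega>. ((F \<omega>, X \<omega>), W1 \<omega>)"
  note sf = W1 Wr Wa F X G simple_function_Pair
  have "\<I>(Wr ; X | W1) = \<H>(Wr | W1) - \<H>(Wr | (\<lambda>\<omega>. (X \<omega>, W1 \<omega>)))"
    by (rule conditional_mutual_information_eq_conditional_entropy_diff[OF Wr X W1])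
  moreover have "\<H>(Wr | W1) = \<H>(Wa) - \<H>(W1)"
  proof -
    have "\<H>(\<lambda>\<omega>. (W1 \<omega>, Wr \<omega>)) = \<H>(Wa)"
      by (rule entropy_eq_if_determined) (use sf Wa_eq in auto)
    then show ?thesis by (simp add: conditional_entropy_eq_entropies W1 Wr)
  qed
  moreover have "\<H>(Wr | ?FXW) \<le> \<H>(Wr | (\<lambda>\<omega>. (X \<omega>, W1 \<omega>)))"
    by (rule conditional_entropy_le_if_determined) (use sf in auto)
  moreover have "\<H>(Wr | ?FXW) = \<H>(\<lambda>\<omega>. (?FXW \<omega>, Wr \<omega>)) - \<H>(?FXW)"
    by (rule conditional_entropy_eq_entropies) (use sf in auto)
  moreover have "\<H>(Wa) + \<H>(G) = \<H>(\<lambda>\<omega>. (G \<omega>, Wa \<omega>))"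
    using indep mutual_information_eq_entropy_conditional_entropy[OF Wa G]
    by (simp add: conditional_entropy_eq_entropies Wa G)
  moreover have "\<H>(\<lambda>\<omega>. (G \<omega>, Wa \<omega>)) \<le> \<H>(\<lambda>\<omega>. (?FXW \<omega>, Wr \<omega>))"
    by (rule entropy_le_if_determined) (use sf in \<open>auto dest: G_det simp: Wa_eq\<close>)
  ultimately show ?thesis by linarith
qed

lemma entropy_query_answer_le:
  assumes F: "simple_function M F" and R: "simple_function M R"
    and Q: "simple_function M Q" and A: "simple_function M A"
    and query: "\<H>(Q | F) = 0"
  shows "\<H>(\<lambda>\<omega>. (F \<omega>, Q \<omega>, A \<omega>, R \<omega>)) \<le> \<H>(\<lambda>\<omega>. (F \<omega>, R \<omega>)) + \<H>(A | Q)"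
proof -
  let ?G = "\<lambda>\<omega>. (F \<omega>, R \<omega>)" and ?QG = "\<lambda>\<omega>. (Q \<omega>, F \<omega>, R \<omega>)"
  note sf = F R Q A simple_function_Pair
  have "\<H>(\<lambda>\<omega>. (F \<omega>, Q \<omega>, A \<omega>, R \<omega>)) = \<H>(\<lambda>\<omega>. (?QG \<omega>, A \<omega>))"
    by (rule entropy_eq_if_determined) (use sf in auto)
  also have "\<dots> = \<H>(?QG) + \<H>(A | ?QG)"
    by (rule entropy_chain_rule) (use sf in auto)
  also have "\<H>(?QG) = \<H>(\<lambda>\<omega>. (?G \<omega>, Q \<omega>))"
    by (rule entropy_eq_if_determined) (use sf in auto)
  also have "\<dots> = \<H>(?G) + \<H>(Q | ?G)"
    by (rule entropy_chain_rule) (use sf in auto)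
  also have "\<H>(Q | ?G) \<le> \<H>(Q | F)"
    by (rule conditional_entropy_le_if_determined) (use sf in auto)
  also have "\<H>(A | ?QG) \<le> \<H>(A | Q)"
    by (rule conditional_entropy_le_if_determined) (use sf in auto)
  finally show ?thesis using query by simp
qed

lemma conditional_entropy_le_total_length:
  fixes A :: "'a \<Rightarrow> 'f::finite list list"
  assumes b: "b = real CARD('f)" and A: "simple_function M A" and Q: "simple_function M Q"
    and profile: "\<And>\<omega> \<omega>'. \<omega> \<in> space M \<Longrightarrow> \<omega>' \<in> space M \<Longrightarrow> Q \<omega> = Q \<omega>' \<Longrightarrow>
      map length (A \<omega>) = map length (A \<omega>')"
    and total: "\<And>\<omega>. \<omega> \<in> space M \<Longrightarrow> length (concat (A \<omega>)) \<le> D"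
  shows "\<H>(A | Q) \<le> D"
proof -
  text \<open>Padding the concatenated answers to exactly D symbols loses nothing once Q is known,
    because Q fixes how the padded word splits into the individual answers.\<close>
  define pad :: "'f list list \<Rightarrow> 'f list"
    where "pad xs = concat xs @ replicate (D - length (concat xs)) undefined" for xs
  define P where "P \<omega> = pad (A \<omega>)" for \<omega>
  have P: "simple_function M P"
    unfolding P_def using simple_function_compose[OF A, of pad] by (simp add: comp_def)
  have take_P: "take (length (concat (A \<omega>))) (P \<omega>) = concat (A \<omega>)" for \<omega>
    by (simp add: P_def pad_def)
  have decode: "(Q \<omega>, A \<omega>) = (Q \<omega>', A \<omega>') \<longleftrightarrow> (Q \<omega>, P \<omega>) = (Q \<omega>', P \<omega>')"
    if "\<omega> \<in> space M" "\<omega>' \<in> space M" for \<omega> \<omega>'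
  proof
    assume eq: "(Q \<omega>, P \<omega>) = (Q \<omega>', P \<omega>')"
    then have lengths: "map length (A \<omega>) = map length (A \<omega>')" by (intro profile[OF that]) simp
    then have "length (concat (A \<omega>)) = length (concat (A \<omega>'))" by (simp only: length_concat)
    then have "concat (A \<omega>) = concat (A \<omega>')"
      by (metis take_P eq prod.inject)
    then have "A \<omega> = A \<omega>'"
      using lengths by (intro concat_injective)
        (auto simp: in_set_zip dest: map_eq_imp_length_eq, metis nth_map)
    then show "(Q \<omega>, A \<omega>) = (Q \<omega>', A \<omega>')" using eq by simp
  qed (simp add: P_def)
  have "\<H>(A | Q) = \<H>(P | Q)"
  proof -
    have "\<H>(\<lambda>\<omega>. (Q \<omega>, A \<omega>)) = \<H>(\<lambda>\<omega>. (Q \<omega>, P \<omega>))"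
      by (rule entropy_eq_if_determined[OF _ _ decode[symmetric]]) (use P A Q in auto)
    then show ?thesis by (simp add: conditional_entropy_eq_entropies A P Q)
  qed
  also have "\<dots> \<le> \<H>(P)" using P Q by (rule conditional_entropy_less_eq_entropy)
  also have "\<dots> \<le> log b (card {xs. set xs \<subseteq> (UNIV :: 'f set) \<and> length xs = D})"
    by (rule entropy_le_log_card[OF P finite_lists_length_eq]) (auto simp: P_def pad_def total)
  also have "\<dots> = D"
    using b_gt_1 by (subst card_lists_length_eq) (simp_all add: b log_nat_power)
  finally show ?thesis .
qed

lemma conditional_mutual_information_le_download:
  fixes A :: "'a \<Rightarrow> 'f::finite list list"
  assumes b: "b = real CARD('f)"
    and W1: "simple_function M W1" and Wr: "simple_function M Wr" and Wa: "simple_function M Wa"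
    and F: "simple_function M F" and RS: "simple_function M RS" and RU: "simple_function M RU"
    and Q: "simple_function M Q" and A: "simple_function M A"
    and Wa_eq: "\<And>\<omega> \<omega>'. \<omega> \<in> space M \<Longrightarrow> \<omega>' \<in> space M \<Longrightarrow>
      Wa \<omega> = Wa \<omega>' \<longleftrightarrow> (W1 \<omega>, Wr \<omega>) = (W1 \<omega>', Wr \<omega>')"
    and RU_det: "\<And>\<omega> \<omega>'. \<omega> \<in> space M \<Longrightarrow> \<omega>' \<in> space M \<Longrightarrow> RS \<omega> = RS \<omega>' \<Longrightarrow> RU \<omega> = RU \<omega>'"
    and indep: "\<I>(Wa ; (\<lambda>\<omega>. (F \<omega>, RS \<omega>, RU \<omega>))) = 0"
    and query: "\<H>(Q | F) = 0"
    and decode: "\<H>(W1 | (\<lambda>\<omega>. (F \<omega>, A \<omega>, RU \<omega>))) = 0"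
    and profile: "\<And>\<omega> \<omega>'. \<omega> \<in> space M \<Longrightarrow> \<omega>' \<in> space M \<Longrightarrow> Q \<omega> = Q \<omega>' \<Longrightarrow>
      map length (A \<omega>) = map length (A \<omega>')"
    and total: "\<And>\<omega>. \<omega> \<in> space M \<Longrightarrow> length (concat (A \<omega>)) \<le> D"
  shows "\<I>(Wr ; (\<lambda>\<omega>. (Q \<omega>, A \<omega>, RS \<omega>)) | W1) \<le> D - \<H>(W1)"
proof -
  let ?X = "\<lambda>\<omega>. (Q \<omega>, A \<omega>, RS \<omega>)" and ?G = "\<lambda>\<omega>. (F \<omega>, RS \<omega>)"
  let ?FX = "\<lambda>\<omega>. (F \<omega>, Q \<omega>, A \<omega>, RS \<omega>)"
  note sf = W1 Wr Wa F RS RU Q A simple_function_Pair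
  have "\<H>(Wa | ?G) = \<H>(Wa | (\<lambda>\<omega>. (F \<omega>, RS \<omega>, RU \<omega>)))"
    by (rule conditional_entropy_eq_if_determined) (use sf in \<open>auto dest: RU_det\<close>)
  then have "\<I>(Wa ; ?G) = 0"
    using indep by (simp add: mutual_information_eq_entropy_conditional_entropy sf)
  then have "\<I>(Wr ; ?X | W1) + \<H>(W1) + \<H>(?G) \<le> \<H>(\<lambda>\<omega>. (?FX \<omega>, W1 \<omega>))"
    by (intro conditional_mutual_information_le_of_independent) (use sf Wa_eq in auto)
  moreover have "\<H>(\<lambda>\<omega>. (?FX \<omega>, W1 \<omega>)) = \<H>(?FX) + \<H>(W1 | ?FX)"
    by (rule entropy_chain_rule) (use sf in auto)
  moreover have "\<H>(W1 | ?FX) \<le> \<H>(W1 | (\<lambda>\<omega>. (F \<omega>, A \<omega>, RU \<omega>)))"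
    by (rule conditional_entropy_le_if_determined) (use sf in \<open>auto dest: RU_det\<close>)
  moreover have "\<H>(?FX) \<le> \<H>(?G) + \<H>(A | Q)"
    by (rule entropy_query_answer_le[OF F RS Q A query])
  moreover have "\<H>(A | Q) \<le> D"
    by (rule conditional_entropy_le_total_length[OF b A Q profile total])
  ultimately show ?thesis using decode by linarith
qed

end

lemma simple_function_Ws: "(\<And>k. k \<in> set ks \<Longrightarrow> simple_function M (W k)) \<Longrightarrow> simple_function M (Ws W ks)"
  unfolding Ws_def by (rule simple_function_map_list)

lemma simple_function_alldb:
  "(\<And>n. n \<in> {1..N} \<Longrightarrow> simple_function M (X n)) \<Longrightarrow> simple_function M (alldb N X)"
  unfolding alldb_def by (rule simple_function_map_list) auto

lemma simple_function_RV:
  "finite S \<Longrightarrow> (\<And>j. j \<in> S \<Longrightarrow> simple_function M (Rs j)) \<Longrightarrow> simple_function M (RV Rs S)"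
  unfolding RV_def by (rule simple_function_restrict)

lemma RV_subset: "U \<subseteq> J \<Longrightarrow> RV Rs U \<omega> = restrict (RV Rs J \<omega>) U"
  by (auto simp: RV_def restrict_def fun_eq_iff)

lemma Wall_eq_Cons: "1 \<le> K \<Longrightarrow> Wall K W \<omega> = W 1 \<omega> # Ws W [2..<Suc K] \<omega>"
  by (simp add: Wall_def Ws_def upt_conv_Cons numeral_2_eq_2 del: upt_Suc)

lemma length_concat_alldb: "length (concat (alldb N X \<omega>)) = (\<Sum>n=1..N. length (X n \<omega>))"
  by (simp only: alldb_def length_concat map_map comp_def sum_list_distinct_conv_sum_set distinct_upt
      set_upt atLeastLessThanSuc_atLeastAtMost)

lemma map_length_alldb_eq:
  assumes "\<And>n. n \<in> {1..N} \<Longrightarrow> length (A n \<omega>) = len n (Q n \<omega>)"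
    and "\<And>n. n \<in> {1..N} \<Longrightarrow> length (A n \<omega>') = len n (Q n \<omega>')"
    and "alldb N Q \<omega> = alldb N Q \<omega>'"
  shows "map length (alldb N A \<omega>) = map length (alldb N A \<omega>')"
  using assms unfolding alldb_def map_map map_eq_conv comp_def set_upt atLeastLessThanSuc_atLeastAtMost
  by metis

lemma two_le_card_field: "2 \<le> CARD('f::{finite,field})"
proof -
  have "card {0::'f, 1} \<le> CARD('f)" by (rule card_mono) auto
  then show ?thesis by simp
qed

lemma spir_model_information_space:
  fixes W :: "nat \<Rightarrow> 'a \<Rightarrow> 'f::{finite,field} list"
  assumes "spir_model M N K L J m F Rs W Q A"
  shows "information_space M (real CARD('f))"
proof -
  have "prob_space M" using assms by (simp add: spir_model_def)
  moreover have "1 < real CARD('f)" using two_le_card_field[where 'f='f] by simp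
  ultimately show ?thesis by (simp add: information_space_def information_space_axioms_def)
qed

lemma entropy_first_message_ge:
  fixes W :: "nat \<Rightarrow> 'a \<Rightarrow> 'f::{finite,field} list"
  assumes model: "spir_model M N K L J m F Rs W Q A" and K: "1 \<le> K"
  shows "real L \<le> Ent M (real CARD('f)) (W 1)"
proof -
  interpret information_space M "real CARD('f)"
    using model by (rule spir_model_information_space)
  let ?c = "real CARD('f)"
  define Msgs where "Msgs n = {ws. set ws \<subseteq> {w :: 'f list. set w \<subseteq> UNIV \<and> length w = L} \<and> length ws = n}"
    for n
  have finL: "finite {w :: 'f list. set w \<subseteq> UNIV \<and> length w = L}"
    by (rule finite_lists_length_eq) simp
  have fin: "finite (Msgs n)" for n
    unfolding Msgs_def by (rule finite_lists_length_eq[OF finL])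
  have card: "card (Msgs n) = CARD('f) ^ (n * L)" for n
    unfolding Msgs_def card_lists_length_eq[OF finL] card_lists_length_eq[OF finite_class.finite_UNIV]
    by (simp add: power_mult[symmetric] mult.commute)
  have ne: "Msgs K \<noteq> {}"
    using card[of K] fin[of K] by auto
  have Wa: "simple_function M (Wall K W)"
    using model unfolding spir_model_def Wall_def by (auto intro!: simple_function_Ws)
  have W1: "simple_function M (W 1)"
    using model K unfolding spir_model_def by auto
  have unif: "prob (Wall K W -` {ws} \<inter> space M) = 1 / card (Msgs K)" if "ws \<in> Msgs K" for ws
  proof -
    have "length ws = K \<and> (\<forall>w\<in>set ws. length w = L)" using that by (auto simp: Msgs_def)
    with model have "prob {\<omega> \<in> space M. Wall K W \<omega> = ws} = 1 / ?c ^ (K * L)"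
      unfolding spir_model_def by blast
    moreover have "Wall K W -` {ws} \<inter> space M = {\<omega> \<in> space M. Wall K W \<omega> = ws}" by auto
    ultimately show ?thesis by (simp add: card)
  qed
  have fibre: "card {ws \<in> Msgs K. hd ws = w} \<le> card (Msgs (K - 1))" for w
  proof (rule card_inj_on_le[of tl])
    show "inj_on tl {ws \<in> Msgs K. hd ws = w}"
      using K by (auto simp: inj_on_def Msgs_def intro: list.expand)
    show "tl ` {ws \<in> Msgs K. hd ws = w} \<subseteq> Msgs (K - 1)"
    proof
      fix vs assume "vs \<in> tl ` {ws \<in> Msgs K. hd ws = w}"
      then obtain ws where "ws \<in> Msgs K" "vs = tl ws" by blast
      with K show "vs \<in> Msgs (K - 1)" by (cases ws) (auto simp: Msgs_def)
    qed
  qed (rule fin)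
  have "Pr (W 1) w \<le> 1 / ?c ^ L" for w
  proof -
    have "W 1 = (\<lambda>\<omega>. hd (Wall K W \<omega>))" by (simp add: Wall_eq_Cons[OF K])
    then have "Pr (W 1) w \<le> card {ws \<in> Msgs K. hd ws = w} / card (Msgs K)"
      using prob_compose_le_of_uniform[OF Wa fin ne unif, of hd w] by simp
    also have "\<dots> \<le> ?c ^ ((K - 1) * L) / ?c ^ (K * L)"
    proof -
      have "real (card {ws \<in> Msgs K. hd ws = w}) \<le> ?c ^ ((K - 1) * L)"
        using fibre[of w] by (simp add: card)
      then show ?thesis by (simp add: card divide_right_mono)
    qed
    also have "\<dots> = 1 / ?c ^ L"
      using K by (cases K) (auto simp: power_add)
    finally show ?thesis .
  qed
  then have "- log ?c (1 / ?c ^ L) \<le> Ent M ?c (W 1)"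
    by (intro entropy_ge_if_Pr_le[OF W1]) auto
  then show ?thesis
    using b_gt_1 by (simp add: log_divide log_nat_power)
qed

theorem lemma1:
  fixes M :: "'a measure" and N K L m D :: nat and J :: "'j set"
    and F :: "'a \<Rightarrow> 'v" and Rs :: "'j \<Rightarrow> 'a \<Rightarrow> 'r"
    and W :: "nat \<Rightarrow> 'a \<Rightarrow> 'f::{finite,field} list"
    and Q :: "nat \<Rightarrow> 'j set \<Rightarrow> nat \<Rightarrow> 'a \<Rightarrow> 'qv"
    and A :: "nat \<Rightarrow> 'j set \<Rightarrow> nat \<Rightarrow> 'a \<Rightarrow> 'f list"
  assumes "N \<ge> 1" and "K \<ge> 2"
    and model: "spir_model M N K L J m F Rs W Q A"
    and valid: "valid_scheme M N K J m F Rs W Q A"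
    and answer_format: "\<exists>len. \<forall>k\<in>{1..K}. \<forall>U\<in>adm J m. \<forall>n\<in>{1..N}. \<forall>\<omega>\<in>space M.
                          length (A k U n \<omega>) = len n (Q k U n \<omega>)"
    and D_max: "\<forall>k\<in>{1..K}. \<forall>U\<in>adm J m. \<forall>\<omega>\<in>space M. (\<Sum>n=1..N. length (A k U n \<omega>)) \<le> D"
    and D_attained: "\<exists>k\<in>{1..K}. \<exists>U\<in>adm J m. \<exists>\<omega>\<in>space M. (\<Sum>n=1..N. length (A k U n \<omega>)) = D"
    and U: "U \<in> adm J m"
  shows "CMI M (real CARD('f)) (Ws W [2..<Suc K])
           (\<lambda>\<omega>. (alldb N (Q 1 U) \<omega>, alldb N (A 1 U) \<omega>, RV Rs J \<omega>)) (W 1)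
         \<le> real D - real L"
proof -
  interpret information_space M "real CARD('f)"
    using model by (rule spir_model_information_space)
  have K1: "1 \<le> K" and k1: "1 \<in> {1..K}" and UJ: "U \<subseteq> J"
    using \<open>K \<ge> 2\<close> U by (auto simp: adm_def)
  have sf: "simple_function M (W 1)" "simple_function M (Ws W [2..<Suc K])"
    "simple_function M (Wall K W)" "simple_function M F"
    "simple_function M (RV Rs J)" "simple_function M (RV Rs U)"
    "simple_function M (alldb N (Q 1 U))" "simple_function M (alldb N (A 1 U))"
    using model U UJ k1 unfolding spir_model_def Wall_def
    by (auto intro!: simple_function_Ws simple_function_alldb simple_function_RV intro: finite_subset)
  obtain len where len: "\<And>n \<omega>. n \<in> {1..N} \<Longrightarrow> \<omega> \<in> space M \<Longrightarrow> length (A 1 U n \<omega>) = len n (Q 1 U n \<omega>)"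
    using answer_format U k1 by blast
  have "CMI M (real CARD('f)) (Ws W [2..<Suc K])
           (\<lambda>\<omega>. (alldb N (Q 1 U) \<omega>, alldb N (A 1 U) \<omega>, RV Rs J \<omega>)) (W 1)
         \<le> real D - Ent M (real CARD('f)) (W 1)"
  proof (rule conditional_mutual_information_le_download[OF refl sf])
    show "Wall K W \<omega> = Wall K W \<omega>' \<longleftrightarrow> (W 1 \<omega>, Ws W [2..<Suc K] \<omega>) = (W 1 \<omega>', Ws W [2..<Suc K] \<omega>')"
      for \<omega> \<omega>' by (simp add: Wall_eq_Cons[OF K1])
    show "RV Rs J \<omega> = RV Rs J \<omega>' \<Longrightarrow> RV Rs U \<omega> = RV Rs U \<omega>'" for \<omega> \<omega>'
      by (metis RV_subset[OF UJ])
    show "alldb N (Q 1 U) \<omega> = alldb N (Q 1 U) \<omega>' \<Longrightarrow>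
        map length (alldb N (A 1 U) \<omega>) = map length (alldb N (A 1 U) \<omega>')"
      if "\<omega> \<in> space M" "\<omega>' \<in> space M" for \<omega> \<omega>'
      using len that by (intro map_length_alldb_eq)
    show "length (concat (alldb N (A 1 U) \<omega>)) \<le> D" if "\<omega> \<in> space M" for \<omega>
      using D_max U k1 that by (simp add: length_concat_alldb)
  qed (use valid U k1 in \<open>auto simp: valid_scheme_def Let_def\<close>)
  moreover have "real L \<le> Ent M (real CARD('f)) (W 1)"
    by (rule entropy_first_message_ge[OF model K1])
  ultimately show ?thesis by linarith
qed

end
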